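(* Let $0<\epsilon\le0.01$, $\Delta\ge0$, and let $\mathbb{D}_1,\mathbb{D}_2$ be distributions on $(0,\infty)$ with $\mathrm{EMD}(\mathbb{D}_1,\mathbb{D}_2)\le\Delta$. Then for every $\theta\in\mathbb{R}^+$, $$\mathbb{E}_{y\sim\mathbb{D}_1}[g(\theta+\epsilon,y)]\le(1+\epsilon)\left(1+\frac{\Delta}{\epsilon^2}\right)\mathbb{E}_{y\sim\mathbb{D}_2}[g(\theta,y)].$$
   Context: For threshold $\theta\ge0$ and season length $y>0$: $g(\theta,y)=\frac{1+\theta}{\min\{1,y\}}$ if $y\ge\theta$ and $g(\theta,y)=\frac{y}{\min\{1,y\}}$ otherwise (the competitive ratio of the ski-rental strategy that rents, at cost $1$ per unit time, until time $\theta$ and then buys at cost $1$). Earth mover distance: for distributions $\mathbb{X},\mathbb{Y}$ on $\mathbb{R}$, $\mathrm{EMD}(\mathbb{X},\mathbb{Y})=\min\mathbb{E}_{(u,v)\sim\mathbb{J}}|u-v|$ over all couplings $\mathbb{J}$ with marginals $\mathbb{X},\mathbb{Y}$. *)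

theory Defs
  imports "HOL-Probability.Probability"
begin

text \<open>Competitive ratio of the ski-rental strategy with threshold theta on season length y.\<close>
definition g :: "real \<Rightarrow> real \<Rightarrow> real" where
  "g \<theta> y = (if y \<ge> \<theta> then (1 + \<theta>) / min 1 y else y / min 1 y)"

definition real_distr :: "real measure \<Rightarrow> bool" where
  "real_distr D \<longleftrightarrow> prob_space D \<and> sets D = sets borel"

definition coupling :: "(real \<times> real) measure \<Rightarrow> real measure \<Rightarrow> real measure \<Rightarrow> bool" where
  "coupling J X Y \<longleftrightarrow> prob_space J \<and> sets J = sets borel \<and>
     distr J borel fst = X \<and> distr J borel snd = Y"

definition EMD :: "real measure \<Rightarrow> real measure \<Rightarrow> ennreal" where
  "EMD X Y = (INF J \<in> {J. coupling J X Y}. \<integral>\<^sup>+ p. ennreal \<bar>fst p - snd p\<bar> \<partial>J)"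

end

theory Submission
  imports Defs
begin

text \<open>Compare the delayed strategy on \<open>u\<close> with the original one on \<open>v\<close>, where \<open>(u, v)\<close>
  is drawn from a coupling. Except when \<open>v < \<theta> \<le> \<theta> + \<epsilon> \<le> u\<close>, delaying costs at most
  a factor \<open>1 + \<epsilon>\<close> plus a Lipschitz error in \<open>u - v\<close>, whose constant is at most
  \<open>(1 + \<epsilon>) / \<epsilon>\<^sup>2\<close> because buying only at \<open>u \<ge> \<theta> + \<epsilon> \<ge> \<epsilon>\<close> keeps \<open>min 1 u\<close> away
  from \<open>0\<close>; in the exceptional case \<open>\<bar>u - v\<bar> > \<epsilon>\<close> pays for the whole purchase. Integrating
  \<open>g (\<theta> + \<epsilon>) u \<le> (1 + \<epsilon>) g \<theta> v + (1 + \<epsilon>) / \<epsilon>\<^sup>2 \<bar>u - v\<bar>\<close> over near-optimal couplings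
  gives an additive error \<open>(1 + \<epsilon>) \<Delta> / \<epsilon>\<^sup>2\<close>, which is absorbed multiplicatively since
  \<open>g \<ge> 1\<close>.\<close>

lemma g_below_threshold: "0 < y \<Longrightarrow> y < \<theta> \<Longrightarrow> g \<theta> y = max 1 y"
  by (auto simp: g_def min_def max_def)

lemma g_above_threshold: "\<theta> \<le> y \<Longrightarrow> g \<theta> y = (1 + \<theta>) / min 1 y"
  by (simp add: g_def)

lemma one_plus_threshold_le_g:
  assumes "0 \<le> \<theta>" "\<theta> \<le> y" "0 < y"
  shows "1 + \<theta> \<le> g \<theta> y"
proof -
  have "(1 + \<theta>) / 1 \<le> (1 + \<theta>) / min 1 y"
    using assms by (intro divide_left_mono) auto
  then show ?thesis using assms(2) by (simp add: g_above_threshold)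
qed

lemma one_le_g: "0 \<le> \<theta> \<Longrightarrow> 0 < y \<Longrightarrow> 1 \<le> g \<theta> y"
  using one_plus_threshold_le_g[of \<theta> y] g_below_threshold[of y \<theta>] by (cases "\<theta> \<le> y") auto

lemma threshold_ratio_le:
  fixes t e :: real
  assumes "0 \<le> t" "0 < e"
  shows "(1 + (t + e)) / (t + e)\<^sup>2 \<le> (1 + e) / e\<^sup>2"
proof -
  have "(1 + e) * (t + e)\<^sup>2 - (1 + (t + e)) * e\<^sup>2 = t * (t + 2 * e) + e * (t + e) * t"
    by (simp add: algebra_simps power2_eq_square)
  also have "\<dots> \<ge> 0" using assms by simp
  finally show ?thesis using assms by (simp add: field_simps)
qed

lemma one_le_one_plus_div_power2:
  fixes e :: real
  assumes "0 < e" "e \<le> 1"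
  shows "1 \<le> (1 + e) / e\<^sup>2"
proof -
  have "e\<^sup>2 \<le> 1 + e" using assms by (simp add: power_le_one add_increasing2)
  then show ?thesis using assms by simp
qed

lemma g_shift_le_below_threshold:
  fixes t e u v :: real
  assumes "0 < e" "e \<le> 1" "0 \<le> t" "0 < u" "0 < v" "u < t + e"
  shows "g (t + e) u \<le> (1 + e) * g t v + (1 + e) / e\<^sup>2 * \<bar>u - v\<bar>"
proof -
  have "g t v \<le> (1 + e) * g t v" using one_le_g[of t v] assms by simp
  moreover have "\<bar>u - v\<bar> \<le> (1 + e) / e\<^sup>2 * \<bar>u - v\<bar>"
    using mult_right_mono[OF one_le_one_plus_div_power2] assms by simp
  moreover have "max 1 u \<le> g t v + \<bar>u - v\<bar>"
  proof (cases "t \<le> v")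
    case True
    then show ?thesis using one_plus_threshold_le_g[of t v] assms by auto
  next
    case False
    then show ?thesis using g_below_threshold[of v t] assms by auto
  qed
  ultimately show ?thesis using g_below_threshold[of u "t + e"] assms by simp
qed

lemma g_shift_le_both_above_threshold:
  fixes t e u v :: real
  assumes "0 < e" "0 \<le> t" "0 < u" "0 < v" "t + e \<le> u" "t \<le> v"
  shows "g (t + e) u \<le> (1 + e) * g t v + (1 + e) / e\<^sup>2 * \<bar>u - v\<bar>"
proof -
  define L a b where "L = 1 + (t + e)" and "a = min 1 u" and "b = min 1 v"
  have a: "0 < a" "a \<le> 1" and b: "0 < b" "b \<le> 1" and L: "0 < L"
    using assms by (auto simp: L_def a_def b_def)
  have "L / b \<le> (1 + e) * g t v"
    using assms b by (simp add: g_above_threshold L_def b_def field_simps)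
  moreover have "L / a \<le> L / b + (1 + e) / e\<^sup>2 * \<bar>u - v\<bar>"
  proof (cases "b \<le> a")
    case True
    then have "L / a \<le> L / b" using a b L by (intro divide_left_mono) auto
    then show ?thesis using assms by (simp add: add_increasing2)
  next
    case False
    then have "a = u" "b - a \<le> \<bar>u - v\<bar>" "t + e \<le> a"
      using assms by (auto simp: a_def b_def min_def split: if_splits)
    have "L / a - L / b = L / (a * b) * (b - a)" using a b by (simp add: field_simps)
    also have "\<dots> \<le> L / (t + e)\<^sup>2 * \<bar>u - v\<bar>"
    proof (intro mult_mono divide_left_mono)
      show "(t + e)\<^sup>2 \<le> a * b"
        using \<open>t + e \<le> a\<close> False assms by (simp add: power2_eq_square mult_mono)
    qed (use \<open>b - a \<le> \<bar>u - v\<bar>\<close> False assms L a b in auto)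
    also have "\<dots> \<le> (1 + e) / e\<^sup>2 * \<bar>u - v\<bar>"
      using mult_right_mono[OF threshold_ratio_le[of t e], of "\<bar>u - v\<bar>"] assms by (simp add: L_def)
    finally show ?thesis by simp
  qed
  ultimately show ?thesis using assms by (simp add: g_above_threshold L_def a_def add.assoc)
qed

lemma g_shift_le_above_below_threshold:
  fixes t e u v :: real
  assumes "0 < e" "e \<le> 1" "0 \<le> t" "0 < v" "t + e \<le> u" "v < t"
  shows "g (t + e) u \<le> (1 + e) * g t v + (1 + e) / e\<^sup>2 * \<bar>u - v\<bar>"
proof -
  define d where "d = u - v"
  have d: "e < d" "\<bar>u - v\<bar> = d" using assms by (auto simp: d_def)
  have penalty: "(1 + e) / e\<^sup>2 * d = d / e\<^sup>2 + d / e"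
    using assms by (simp add: field_simps power2_eq_square)
  have "1 / e \<le> d / e\<^sup>2" "d \<le> d / e"
    using d assms by (simp_all add: field_simps power2_eq_square)
  moreover have "1 \<le> 1 / e" using assms by simp
  moreover have "g t v = max 1 v" "1 \<le> max 1 v" "v \<le> max 1 v"
    using g_below_threshold[of v t] assms by simp_all
  ultimately have "max (1 + 1 / e) (1 + v + d) \<le> g t v + (1 + e) / e\<^sup>2 * \<bar>u - v\<bar>"
    unfolding d(2) penalty max.bounded_iff using d(1) assms(1) by (intro conjI; linarith)
  moreover have "g (t + e) u \<le> max (1 + 1 / e) (1 + v + d)"
  proof (cases "1 \<le> u")
    case True
    then show ?thesis using assms by (simp add: g_above_threshold d_def)
  next
    case False
    have "g (t + e) u = (1 + (t + e)) / u" using False assms by (simp add: g_above_threshold)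
    also have "\<dots> \<le> (1 + (t + e)) / (t + e)" using assms by (intro divide_left_mono) auto
    also have "\<dots> = 1 + 1 / (t + e)" using assms by (simp add: field_simps)
    also have "\<dots> \<le> 1 + 1 / e" using assms by (simp add: frac_le)
    finally show ?thesis by simp
  qed
  moreover have "g t v \<le> (1 + e) * g t v" using one_le_g[of t v] assms by simp
  ultimately show ?thesis by linarith
qed

lemma g_shift_le:
  fixes t e u v :: real
  assumes "0 < e" "e \<le> 1" "0 \<le> t" "0 < u" "0 < v"
  shows "g (t + e) u \<le> (1 + e) * g t v + (1 + e) / e\<^sup>2 * \<bar>u - v\<bar>"
  using g_shift_le_below_threshold g_shift_le_both_above_threshold g_shift_le_above_below_threshold
    assms by (cases "u < t + e"; cases "t \<le> v") auto

lemma g_measurable [measurable]: "g \<theta> \<in> borel_measurable borel"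
  unfolding g_def by measurable

lemma coupling_measurable_iff:
  "coupling J X Y \<Longrightarrow> measurable J N = measurable (borel \<Otimes>\<^sub>M borel) N"
  by (intro measurable_cong_sets) (simp_all add: coupling_def borel_prod[symmetric])

lemma nn_integral_le_coupling:
  fixes f h :: "real \<Rightarrow> ennreal"
  assumes J: "coupling J X Y"
    and [measurable]: "f \<in> borel_measurable borel" "h \<in> borel_measurable borel"
    and "AE x in X. P x" "AE y in Y. Q y"
    and f_le: "\<And>x y. P x \<Longrightarrow> Q y \<Longrightarrow> f x \<le> a * h y + b * ennreal \<bar>x - y\<bar>"
  shows "(\<integral>\<^sup>+ x. f x \<partial>X) \<le> a * (\<integral>\<^sup>+ y. h y \<partial>Y) + b * (\<integral>\<^sup>+ p. ennreal \<bar>fst p - snd p\<bar> \<partial>J)"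
proof -
  have X: "X = distr J borel fst" and Y: "Y = distr J borel snd"
    using J by (simp_all add: coupling_def)
  have [measurable]: "fst \<in> J \<rightarrow>\<^sub>M borel" "snd \<in> J \<rightarrow>\<^sub>M borel"
    by (simp_all add: coupling_measurable_iff[OF J])
  have "AE p in J. P (fst p)" using assms(4) unfolding X by (rule AE_distrD[rotated]) measurable
  moreover have "AE p in J. Q (snd p)" using assms(5) unfolding Y by (rule AE_distrD[rotated]) measurable
  ultimately
  have "AE p in J. f (fst p) \<le> a * h (snd p) + b * ennreal \<bar>fst p - snd p\<bar>"
    by eventually_elim (rule f_le)
  then have "(\<integral>\<^sup>+ p. f (fst p) \<partial>J)
      \<le> (\<integral>\<^sup>+ p. a * h (snd p) + b * ennreal \<bar>fst p - snd p\<bar> \<partial>J)"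
    by (rule nn_integral_mono_AE)
  also have "\<dots> = a * (\<integral>\<^sup>+ p. h (snd p) \<partial>J) + b * (\<integral>\<^sup>+ p. ennreal \<bar>fst p - snd p\<bar> \<partial>J)"
    by (simp add: nn_integral_add nn_integral_cmult coupling_measurable_iff[OF J])
  finally show ?thesis unfolding X Y by (simp add: nn_integral_distr)
qed

lemma le_add_mult_EMD:
  assumes "\<And>J. coupling J X Y \<Longrightarrow> A \<le> B + ennreal b * (\<integral>\<^sup>+ p. ennreal \<bar>fst p - snd p\<bar> \<partial>J)"
    and "EMD X Y < \<infinity>"
  shows "A \<le> B + ennreal b * EMD X Y"
proof -
  define S where "S = (\<lambda>J. \<integral>\<^sup>+ p. ennreal \<bar>fst p - snd p\<bar> \<partial>J) ` {J. coupling J X Y}"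
  have EMD: "EMD X Y = Inf S" by (simp add: EMD_def S_def)
  have "Inf S \<noteq> \<infinity>" using assms(2) unfolding EMD by (rule less_imp_neq)
  then have "S \<noteq> {}" by (metis Inf_empty infinity_ennreal_def)
  have "continuous (at_right (Inf S)) (\<lambda>z. B + ennreal b * z)"
    unfolding continuous_within by (intro tendsto_intros) (use \<open>Inf S \<noteq> \<infinity>\<close> in simp)
  then have "B + ennreal b * Inf S = (INF z\<in>S. B + ennreal b * z)"
    using \<open>S \<noteq> {}\<close> by (intro continuous_at_Inf_mono) (auto simp: mono_def add_left_mono mult_left_mono)
  also have "A \<le> \<dots>" using assms(1) by (auto simp: S_def intro!: INF_greatest)
  finally show ?thesis by (simp add: EMD)
qed

lemma one_le_nn_integral_g:
  assumes "prob_space D" "AE y in D. 0 < y" "0 \<le> \<theta>"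
  shows "1 \<le> (\<integral>\<^sup>+ y. ennreal (g \<theta> y) \<partial>D)"
proof -
  have "(1::ennreal) = (\<integral>\<^sup>+ y. 1 \<partial>D)" using assms(1) by (simp add: prob_space.emeasure_space_1)
  also have "\<dots> \<le> (\<integral>\<^sup>+ y. ennreal (g \<theta> y) \<partial>D)"
    using assms(2) by (intro nn_integral_mono_AE) (auto elim!: eventually_mono intro: one_le_g[OF assms(3)])
  finally show ?thesis .
qed

lemma ennreal_g_shift_le:
  fixes t e u v :: real
  assumes "0 < e" "e \<le> 1" "0 \<le> t" "0 < u" "0 < v"
  shows "ennreal (g (t + e) u)
    \<le> ennreal (1 + e) * ennreal (g t v) + ennreal ((1 + e) / e\<^sup>2) * ennreal \<bar>u - v\<bar>"
proof -
  define c where "c = (1 + e) / e\<^sup>2"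
  have "0 \<le> 1 + e" "0 \<le> g t v" "0 \<le> c" "0 \<le> \<bar>u - v\<bar>"
    using one_le_g[of t v] assms by (simp_all add: c_def)
  then have "ennreal ((1 + e) * g t v + c * \<bar>u - v\<bar>)
      = ennreal (1 + e) * ennreal (g t v) + ennreal c * ennreal \<bar>u - v\<bar>"
    by (metis ennreal_mult ennreal_plus mult_nonneg_nonneg)
  with g_shift_le[OF assms] show ?thesis by (metis c_def ennreal_leI)
qed

lemma nn_integral_g_shift_le_EMD:
  fixes e t :: real
  assumes "0 < e" "e \<le> 1" "0 \<le> t"
    and "AE y in D1. 0 < y" "AE y in D2. 0 < y" "EMD D1 D2 < \<infinity>"
  shows "(\<integral>\<^sup>+ y. ennreal (g (t + e) y) \<partial>D1)
    \<le> ennreal (1 + e) * (\<integral>\<^sup>+ y. ennreal (g t y) \<partial>D2) + ennreal ((1 + e) / e\<^sup>2) * EMD D1 D2"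
proof (rule le_add_mult_EMD)
  fix J assume "coupling J D1 D2"
  then show "(\<integral>\<^sup>+ y. ennreal (g (t + e) y) \<partial>D1) \<le> ennreal (1 + e) * (\<integral>\<^sup>+ y. ennreal (g t y) \<partial>D2)
      + ennreal ((1 + e) / e\<^sup>2) * (\<integral>\<^sup>+ p. ennreal \<bar>fst p - snd p\<bar> \<partial>J)"
    using assms(4,5) ennreal_g_shift_le[OF assms(1-3)]
    by (intro nn_integral_le_coupling[where P = "\<lambda>x. 0 < x" and Q = "\<lambda>y. 0 < y"]) simp_all
qed (rule assms(6))

theorem mainTheorem6:
  fixes \<epsilon> \<Delta> \<theta> :: real and D1 D2 :: "real measure"
  assumes "0 < \<epsilon>" and "\<epsilon> \<le> 0.01" and "0 \<le> \<Delta>"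
    and "real_distr D1" and "AE y in D1. 0 < y"
    and "real_distr D2" and "AE y in D2. 0 < y"
    and "EMD D1 D2 \<le> ennreal \<Delta>"
    and "0 < \<theta>"
  shows "(\<integral>\<^sup>+ y. ennreal (g (\<theta> + \<epsilon>) y) \<partial>D1)
           \<le> ennreal ((1 + \<epsilon>) * (1 + \<Delta> / \<epsilon>\<^sup>2)) * (\<integral>\<^sup>+ y. ennreal (g \<theta> y) \<partial>D2)"
proof -
  define c where "c = (1 + \<epsilon>) / \<epsilon>\<^sup>2"
  define I2 where "I2 = (\<integral>\<^sup>+ y. ennreal (g \<theta> y) \<partial>D2)"
  have \<epsilon>: "0 < \<epsilon>" "\<epsilon> \<le> 1" and "0 \<le> \<theta>" "0 \<le> c" using assms(1,2,9) by (simp_all add: c_def)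
  have "1 \<le> I2"
    unfolding I2_def using one_le_nn_integral_g assms(6,7) \<open>0 \<le> \<theta>\<close> by (simp add: real_distr_def)
  have "(\<integral>\<^sup>+ y. ennreal (g (\<theta> + \<epsilon>) y) \<partial>D1) \<le> ennreal (1 + \<epsilon>) * I2 + ennreal c * EMD D1 D2"
    unfolding I2_def c_def using assms(5,7,8)
    by (intro nn_integral_g_shift_le_EMD \<epsilon> \<open>0 \<le> \<theta>\<close>) (simp_all add: le_less_trans)
  also have "ennreal c * EMD D1 D2 \<le> ennreal (c * \<Delta>) * 1"
    using mult_left_mono[OF assms(8)] \<open>0 \<le> c\<close> assms(3) by (simp add: ennreal_mult)
  also have "\<dots> \<le> ennreal (c * \<Delta>) * I2" using \<open>1 \<le> I2\<close> by (rule mult_left_mono) simp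
  also have "ennreal (1 + \<epsilon>) * I2 + ennreal (c * \<Delta>) * I2 = ennreal (1 + \<epsilon> + c * \<Delta>) * I2"
    using \<epsilon> \<open>0 \<le> c\<close> assms(3) by (subst ennreal_plus) (auto simp: distrib_right)
  also have "1 + \<epsilon> + c * \<Delta> = (1 + \<epsilon>) * (1 + \<Delta> / \<epsilon>\<^sup>2)"
    using \<epsilon> by (simp add: c_def field_simps)
  finally show ?thesis by (simp add: I2_def add_left_mono)
qed

end
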